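(* Let $n\ge0$ be an integer and $t,x_0,x_1,\dots,x_n$ commuting indeterminates. For nonnegative integers $m_1,\dots,m_n$ put $M_j=m_j+m_{j+1}+\cdots+m_n$ ($M_{n+1}=0$). Then $$\sum_{m_1,\dots,m_n\ge0}\frac{(1+tx_0)^{n-M_1}}{(n-M_1)!}\prod_{j=1}^n\frac{[t(x_j-x_{j-1})]^{m_j}\,(n-j+1-M_{j+1})}{m_j!}=\prod_{i=1}^n(1+tx_i),$$ where $1/(n-M_1)!$ is interpreted as $0$ when $M_1>n$. *)

theory Defs
  imports Complex_Main "HOL-Library.FuncSet"
begin

definition inv_fact_int :: "int \<Rightarrow> 'a::field_char_0" where
  "inv_fact_int k = (if k < 0 then 0 else inverse (fact (nat k)))"

definition tailsum :: "nat \<Rightarrow> (nat \<Rightarrow> nat) \<Rightarrow> nat \<Rightarrow> nat" where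
  "tailsum n m j = (\<Sum>i\<in>{j..n}. m i)"

end

theory Submission
  imports Defs
begin

(* Write y = 1 + t x_0 and a_j = t (x_j - x_(j-1)).  The factor (1 + t x_0)^(n-M_1)/(n-M_1)!
   is the truncated exponential term E(y, n - M_1), where E(y, k) = y^k/k! for k >= 0 and
   E(y, k) = 0 for k < 0.  Two facts about E drive the proof:
     (i)  the binomial convolution  sum_c E(y, N - c) a^c/c! = E(a + y, N), and
     (ii) the shift rule            N * E(z, N) = z * E(z, N - 1).
   The theorem is generalised to summation over the tail m_l, ..., m_n with arbitrary y and a:
     sum_m E(y, n+1-l - M_l) prod_(j=l..n) a_j^(m_j) (n-j+1-M_(j+1)) / m_j!
       = prod_(i=l..n) (y + a_l + ... + a_i),
   proved by downward induction on l.  Summing out m_l with (i) and (ii) turns the weight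
   E(y, N - m_l) * N into (y + a_l) * E(y + a_l, N - 1), which is the instance of the
   claim for l + 1 with y replaced by y + a_l.  For l = 1 the partial sums of the a_j
   telescope to t x_i - t x_0, giving the product of the 1 + t x_i. *)

definition trunc_exp :: "'a::field_char_0 \<Rightarrow> int \<Rightarrow> 'a" where
  "trunc_exp y k = y ^ nat k * inv_fact_int k"

lemma trunc_exp_neg: "k < 0 \<Longrightarrow> trunc_exp y k = 0"
  by (simp add: trunc_exp_def inv_fact_int_def)

lemma trunc_exp_of_nat: "trunc_exp y (int N) = y ^ N / fact N"
  by (simp add: trunc_exp_def inv_fact_int_def divide_inverse)

(* Fact (i) for a natural exponent: the Cauchy product of two exponential series,
   i.e. the binomial theorem divided by N!. *)
lemma trunc_exp_convolution_nat:
  fixes y a :: "'a::field_char_0"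
  shows "(\<Sum>c\<le>N. trunc_exp y (int N - int c) * (a ^ c / fact c)) = (a + y) ^ N / fact N"
proof -
  have summand: "trunc_exp y (int N - int c) * (a ^ c / fact c)
      = of_nat (N choose c) * a ^ c * y ^ (N - c) / fact N" if "c \<le> N" for c
  proof -
    have "int N - int c = int (N - c)" using that by simp
    hence "trunc_exp y (int N - int c) = y ^ (N - c) / fact (N - c)"
      by (simp only: trunc_exp_of_nat)
    moreover have "of_nat (N choose c) / fact N = (1::'a) / (fact c * fact (N - c))"
      using that by (simp add: binomial_fact)
    ultimately show ?thesis
      by (metis (no_types, lifting) times_divide_eq_left times_divide_eq_right
          divide_divide_eq_left mult.commute mult.left_commute mult_1)
  qed
  have "(\<Sum>c\<le>N. trunc_exp y (int N - int c) * (a ^ c / fact c))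
      = (\<Sum>c\<le>N. of_nat (N choose c) * a ^ c * y ^ (N - c)) / fact N"
    unfolding sum_divide_distrib by (intro sum.cong refl) (rule summand, simp)
  also have "\<dots> = (a + y) ^ N / fact N"
    by (simp add: binomial_ring)
  finally show ?thesis .
qed

(* Fact (i) for an integer exponent N <= K: summands with c > N vanish, and for N < 0
   everything vanishes. *)
lemma trunc_exp_convolution:
  fixes y a :: "'a::field_char_0" and N :: int
  assumes "N \<le> int K"
  shows "(\<Sum>c\<le>K. trunc_exp y (N - int c) * (a ^ c / fact c)) = trunc_exp (a + y) N"
proof (cases "N < 0")
  case True
  then show ?thesis by (simp add: trunc_exp_neg)
next
  case False
  then obtain N' where N': "N = int N'" by (metis nonneg_int_cases not_less)
  have "(\<Sum>c\<le>K. trunc_exp y (N - int c) * (a ^ c / fact c))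
      = (\<Sum>c\<le>N'. trunc_exp y (N - int c) * (a ^ c / fact c))"
    using assms N' by (intro sum.mono_neutral_right) (auto simp: trunc_exp_neg)
  also have "\<dots> = trunc_exp (a + y) N"
    unfolding N' trunc_exp_of_nat by (rule trunc_exp_convolution_nat)
  finally show ?thesis .
qed

lemma trunc_exp_shift:
  fixes z :: "'a::field_char_0" and N :: int
  shows "of_int N * trunc_exp z N = z * trunc_exp z (N - 1)"
proof (cases "N \<le> 0")
  case True
  then show ?thesis by (cases "N = 0") (auto simp: trunc_exp_neg)
next
  case False
  then obtain M where M: "N = int (Suc M)" by (metis gr0_implies_Suc not_le pos_int_cases)
  have "N - 1 = int M" using M by simp
  then show ?thesis
    unfolding \<open>N - 1 = int M\<close> unfolding M trunc_exp_of_nat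
    by (simp add: field_simps del: of_nat_Suc)
qed

definition weight :: "nat \<Rightarrow> (nat \<Rightarrow> 'a::field_char_0) \<Rightarrow> (nat \<Rightarrow> nat) \<Rightarrow> nat \<Rightarrow> 'a" where
  "weight n a m j = a j ^ m j * of_int (int n - int j + 1 - int (tailsum n m (j + 1))) / fact (m j)"

lemma tailsum_update_above: "l < k \<Longrightarrow> tailsum n (g(l := c)) k = tailsum n g k"
  unfolding tailsum_def by (intro sum.cong) auto

lemma tailsum_update_at:
  assumes "l \<le> n"
  shows "tailsum n (g(l := c)) l = c + tailsum n g (Suc l)"
proof -
  have "{l..n} = insert l {Suc l..n}" using assms by auto
  then show ?thesis
    unfolding tailsum_def by (simp add: tailsum_update_above[unfolded tailsum_def])
qed

lemma prod_weight_update: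
  assumes "l \<le> n"
  shows "(\<Prod>j=l..n. weight n a (g(l := c)) j)
       = a l ^ c / fact c * of_int (int (n + 1 - l) - int (tailsum n g (Suc l)))
         * (\<Prod>j=Suc l..n. weight n a g j)"
proof -
  have dom: "{l..n} = insert l {Suc l..n}" using assms by auto
  have "(\<Prod>j=Suc l..n. weight n a (g(l := c)) j) = (\<Prod>j=Suc l..n. weight n a g j)"
    by (intro prod.cong refl) (simp add: weight_def tailsum_update_above)
  moreover have "weight n a (g(l := c)) l
      = a l ^ c / fact c * of_int (int (n + 1 - l) - int (tailsum n g (Suc l)))"
    using assms by (simp add: weight_def tailsum_update_above of_nat_diff)
  ultimately show ?thesis
    unfolding dom by (simp add: prod.insert)
qed

lemma sum_PiE_insert:
  assumes "i \<notin> S"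
  shows "(\<Sum>m\<in>insert i S \<rightarrow>\<^sub>E B. f m) = (\<Sum>c\<in>B. \<Sum>g\<in>S \<rightarrow>\<^sub>E B. f (g(i := c)))"
proof -
  have "(\<Sum>m\<in>insert i S \<rightarrow>\<^sub>E B. f m) = (\<Sum>(c, g)\<in>B \<times> (S \<rightarrow>\<^sub>E B). f (g(i := c)))"
    unfolding PiE_insert_eq by (subst sum.reindex[OF inj_combinator[OF assms]]) (simp add: case_prod_beta')
  then show ?thesis by (simp add: sum.cartesian_product)
qed

definition lhs_tail :: "nat \<Rightarrow> nat \<Rightarrow> nat \<Rightarrow> 'a::field_char_0 \<Rightarrow> (nat \<Rightarrow> 'a) \<Rightarrow> 'a" where
  "lhs_tail n K l y a = (\<Sum>m\<in>{l..n} \<rightarrow>\<^sub>E {..K}.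
     trunc_exp y (int (n + 1 - l) - int (tailsum n m l)) * (\<Prod>j=l..n. weight n a m j))"

(* The key recursion: summing out m_l with the convolution and shift rules replaces y
   by y + a_l and produces one factor y + a_l. *)
lemma lhs_tail_step:
  assumes "l \<le> n" and "n + 1 - l \<le> K"
  shows "lhs_tail n K l y a = (a l + y) * lhs_tail n K (Suc l) (a l + y) a"
proof -
  define N where "N g = int (n + 1 - l) - int (tailsum n g (Suc l))" for g :: "nat \<Rightarrow> nat"
  define P where "P g = (\<Prod>j=Suc l..n. weight n a g j)" for g
  let ?S = "{Suc l..n} \<rightarrow>\<^sub>E {..K}"
  have N_le: "N g \<le> int K" for g using assms by (simp add: N_def)
  have N_pred: "N g - 1 = int (n + 1 - Suc l) - int (tailsum n g (Suc l))" for g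
    using assms by (simp add: N_def)
  have exponent: "int (n + 1 - l) - int (tailsum n (g(l := c)) l) = N g - int c" for g c
    using assms by (simp add: N_def tailsum_update_at)
  have "lhs_tail n K l y a
      = (\<Sum>c\<le>K. \<Sum>g\<in>?S. trunc_exp y (N g - int c) * (a l ^ c / fact c * of_int (N g) * P g))"
  proof -
    have "{l..n} \<rightarrow>\<^sub>E {..K} = insert l {Suc l..n} \<rightarrow>\<^sub>E {..K}"
      using assms(1) by (simp add: Icc_eq_insert_lb_nat)
    then show ?thesis
      unfolding lhs_tail_def
      by (simp only: sum_PiE_insert[of l "{Suc l..n}"] atLeastAtMost_iff Suc_n_not_le_n simp_thms
            exponent prod_weight_update[OF assms(1)] N_def P_def)
  qed
  also have "\<dots> = (\<Sum>g\<in>?S. (\<Sum>c\<le>K. trunc_exp y (N g - int c) * (a l ^ c / fact c)) * of_int (N g) * P g)"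
    by (subst sum.swap) (simp add: sum_distrib_left sum_distrib_right mult_ac)
  also have "\<dots> = (\<Sum>g\<in>?S. (a l + y) * trunc_exp (a l + y) (N g - 1) * P g)"
    by (intro sum.cong refl)
      (simp only: trunc_exp_convolution[OF N_le] flip: trunc_exp_shift, simp add: mult_ac)
  also have "\<dots> = (a l + y) * lhs_tail n K (Suc l) (a l + y) a"
    by (simp add: lhs_tail_def sum_distrib_left N_pred P_def mult.assoc)
  finally show ?thesis .
qed

lemma lhs_tail_closed_form:
  assumes "l \<le> n + 1" and "n + 1 - l \<le> K"
  shows "lhs_tail n K l y a = (\<Prod>i=l..n. y + (\<Sum>k=l..i. a k))"
  using assms
proof (induction "n + 1 - l" arbitrary: l y)
  case 0
  then have "l = n + 1" by simp
  then show ?case by (simp add: lhs_tail_def tailsum_def trunc_exp_def inv_fact_int_def)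
next
  case (Suc d)
  then have l: "l \<le> n" by simp
  have "lhs_tail n K l y a = (a l + y) * lhs_tail n K (Suc l) (a l + y) a"
    using Suc.prems l by (intro lhs_tail_step) simp_all
  also have "\<dots> = (a l + y) * (\<Prod>i=Suc l..n. (a l + y) + (\<Sum>k=Suc l..i. a k))"
    using Suc.hyps(2) Suc.prems by (subst Suc.hyps(1)) simp_all
  also have "(\<Prod>i=Suc l..n. (a l + y) + (\<Sum>k=Suc l..i. a k)) = (\<Prod>i=Suc l..n. y + (\<Sum>k=l..i. a k))"
    by (intro prod.cong refl) (simp add: sum.atLeast_Suc_atMost)
  also have "(a l + y) * \<dots> = (\<Prod>i=l..n. y + (\<Sum>k=l..i. a k))"
    using l by (simp add: prod.atLeast_Suc_atMost add.commute)
  finally show ?case .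
qed

lemma sum_differences_telescope:
  fixes t :: "'a::field_char_0" and x :: "nat \<Rightarrow> 'a"
  shows "(\<Sum>k=1..i. t * (x k - x (k - 1))) = t * x i - t * x 0"
  by (induction i) (auto simp: algebra_simps)

theorem mainTheorem12:
  fixes n :: nat and t :: "'a::field_char_0" and x :: "nat \<Rightarrow> 'a"
  shows "(\<Sum>m\<in>({1..n} \<rightarrow>\<^sub>E {..n}).
            (1 + t * x 0) ^ (n - tailsum n m 1) * inv_fact_int (int n - int (tailsum n m 1)) *
            (\<Prod>j=1..n. (t * (x j - x (j - 1))) ^ (m j)
                 * of_int (int n - int j + 1 - int (tailsum n m (j + 1))) / fact (m j)))
         = (\<Prod>i=1..n. 1 + t * x i)"
proof -
  define y where "y = 1 + t * x 0"
  define a where "a j = t * (x j - x (j - 1))" for j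
  have exp_factor: "y ^ (n - M) * inv_fact_int (int n - int M) = trunc_exp y (int (n + 1 - 1) - int M)"
    for M :: nat
  proof -
    have "nat (int n - int M) = n - M" by arith
    then show ?thesis by (simp add: trunc_exp_def)
  qed
  have "(\<Sum>m\<in>({1..n} \<rightarrow>\<^sub>E {..n}). y ^ (n - tailsum n m 1) * inv_fact_int (int n - int (tailsum n m 1)) *
          (\<Prod>j=1..n. weight n a m j)) = lhs_tail n n 1 y a"
    by (simp only: lhs_tail_def exp_factor)
  also have "\<dots> = (\<Prod>i=1..n. y + (\<Sum>k=1..i. a k))"
    by (rule lhs_tail_closed_form) simp_all
  also have "\<dots> = (\<Prod>i=1..n. 1 + t * x i)"
    by (intro prod.cong refl) (simp only: y_def a_def sum_differences_telescope, simp)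
  finally show ?thesis
    by (simp add: y_def a_def weight_def)
qed

end
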